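(* Let $I$ be an open interval and $a_1,a_2\in I$ with $\cosh(a_1-a_2)\cos(a_1-a_2)\neq1$. Put $d:=a_1-a_2$, $C:=\cosh d$, $c:=\cos d$, $S:=\sinh d$, $s:=\sin d$, and $K:=2-2Cc$. Then for all $f\in\mathscr{C}^4(I)$ and $x\in I$, \[ \begin{aligned} K f(x)&=\Big(f(a_1)+\tfrac12\int_{a_1}^x(f^{(4)}-f)(t)\big(\sinh(a_1-t)-\sin(a_1-t)\big)dt\Big)\Big[(C-c)\big(\cosh(x-a_2)-\cos(x-a_2)\big)-(S+s)\big(\sinh(x-a_2)-\sin(x-a_2)\big)\Big]\\ &\quad+\Big(f'(a_1)+\tfrac12\int_{a_1}^x(f^{(4)}-f)(t)\big(\cosh(a_1-t)-\cos(a_1-t)\big)dt\Big)\Big[(C-c)\big(\sinh(x-a_2)-\sin(x-a_2)\big)-(S-s)\big(\cosh(x-a_2)-\cos(x-a_2)\big)\Big]\\ &\quad+\Big(f(a_2)+\tfrac12\int_{a_2}^x(f^{(4)}-f)(t)\big(\sinh(a_2-t)-\sin(a_2-t)\big)dt\Big)\Big[(C-c)\big(\cosh(x-a_1)-\cos(x-a_1)\big)+(S+s)\big(\sinh(x-a_1)-\sin(x-a_1)\big)\Big]\\ &\quad+\Big(f'(a_2)+\tfrac12\int_{a_2}^x(f^{(4)}-f)(t)\big(\cosh(a_2-t)-\cos(a_2-t)\big)dt\Big)\Big[(C-c)\big(\sinh(x-a_1)-\sin(x-a_1)\big)+(S-s)\big(\cosh(x-a_1)-\cos(x-a_1)\big)\Big].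 \end{aligned} \]
   Context: $\mathscr{C}^4(I)$ denotes the space of four times continuously differentiable complex-valued functions on $I$. *)

theory Defs
  imports "HOL-Analysis.Analysis"
begin

fun nderiv :: "nat \<Rightarrow> (real \<Rightarrow> complex) \<Rightarrow> real \<Rightarrow> complex" where
  "nderiv 0 f = f"
| "nderiv (Suc k) f = (\<lambda>x. vector_derivative (nderiv k f) (at x))"

definition Cn :: "nat \<Rightarrow> real set \<Rightarrow> (real \<Rightarrow> complex) set" where
  "Cn n I = {f. (\<forall>k<n. \<forall>x\<in>I. nderiv k f differentiable (at x))
                 \<and> (\<forall>k\<le>n. continuous_on I (nderiv k f))}"

definition oint :: "real \<Rightarrow> real \<Rightarrow> (real \<Rightarrow> complex) \<Rightarrow> complex" where
  "oint a b g = (if a \<le> b then integral {a..b} g else - integral {b..a} g)"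

end

theory Submission
  imports Defs
begin

text \<open>
  Differentiation permutes psi_0 = sinh - sin, psi_1 = cosh - cos, psi_2 = sinh + sin and
  psi_3 = cosh + cos cyclically, so each psi_i solves y'''' = y. Integrating
  (f'''' - f)(t) psi_i(a - t) by parts four times (Lagrange's identity for the formally
  self-adjoint operator D^4 - 1) turns every bracket f^(i)(a) + 1/2 int_a^x ... of the theorem
  into half the concomitant sum_j f^(3-j)(x) psi_(i+j)(a - x), because psi_k(0) is 2 for
  k = 3 (mod 4) and 0 otherwise. The right-hand side is therefore a combination of f(x), f'(x),
  f''(x), f'''(x), and the addition formulas for the hyperbolic and circular functions show that
  the coefficients of the derivatives vanish while that of f(x) is K. So the identity holds even
  when K = 0; the hypothesis K \<noteq> 0 is only needed to solve it for f(x).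
\<close>

definition sinh_sin_cycle :: "nat \<Rightarrow> real \<Rightarrow> real" where
  "sinh_sin_cycle j u = (case j mod 4 of
      0 \<Rightarrow> sinh u - sin u
    | Suc 0 \<Rightarrow> cosh u - cos u
    | Suc (Suc 0) \<Rightarrow> sinh u + sin u
    | _ \<Rightarrow> cosh u + cos u)"

lemma mod_4_cases:
  fixes j :: nat
  obtains "j mod 4 = 0" | "j mod 4 = 1" | "j mod 4 = 2" | "j mod 4 = 3"
  by linarith

lemma sinh_sin_cycle_eq:
  "j mod 4 = 0 \<Longrightarrow> sinh_sin_cycle j = (\<lambda>u. sinh u - sin u)"
  "j mod 4 = 1 \<Longrightarrow> sinh_sin_cycle j = (\<lambda>u. cosh u - cos u)"
  "j mod 4 = 2 \<Longrightarrow> sinh_sin_cycle j = (\<lambda>u. sinh u + sin u)"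
  "j mod 4 = 3 \<Longrightarrow> sinh_sin_cycle j = (\<lambda>u. cosh u + cos u)"
  by (simp_all add: sinh_sin_cycle_def fun_eq_iff numeral_2_eq_2 numeral_3_eq_3)

lemma mod_4_Suc: "Suc j mod 4 = (if j mod 4 = 3 then 0 else Suc (j mod 4))"
  by presburger

lemma has_real_derivative_sinh_sin_cycle:
  "(sinh_sin_cycle j has_real_derivative sinh_sin_cycle (Suc j) u) (at u)"
  using mod_4_Suc[of j]
  by (cases j rule: mod_4_cases) (simp_all add: sinh_sin_cycle_eq; auto intro!: derivative_eq_intros)+

lemma sinh_sin_cycle_0: "sinh_sin_cycle j 0 = (if j mod 4 = 3 then 2 else 0)"
  by (cases j rule: mod_4_cases) (simp_all add: sinh_sin_cycle_eq)

lemma Cn_has_vector_derivative: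
  assumes "f \<in> Cn n I" and "t \<in> I" and "k < n"
  shows "(nderiv k f has_vector_derivative nderiv (Suc k) f t) (at t)"
  using assms unfolding Cn_def by (simp add: vector_derivative_works[symmetric])

definition lagrange_concomitant :: "(real \<Rightarrow> complex) \<Rightarrow> nat \<Rightarrow> real \<Rightarrow> real \<Rightarrow> complex" where
  "lagrange_concomitant f i a t =
     (\<Sum>j<4. nderiv (3 - j) f t * of_real (sinh_sin_cycle (i + j) (a - t)))"

lemma has_vector_derivative_lagrange_concomitant:
  assumes f: "f \<in> Cn 4 I" and t: "t \<in> I"
  shows "(lagrange_concomitant f i a has_vector_derivative
           (nderiv 4 f t - f t) * of_real (sinh_sin_cycle i (a - t))) (at t)"
proof -
  define g where "g j = nderiv (4 - j) f t * of_real (sinh_sin_cycle (i + j) (a - t))" for j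
  have kernel: "((\<lambda>t. of_real (sinh_sin_cycle k (a - t)) :: complex) has_vector_derivative
                 - of_real (sinh_sin_cycle (Suc k) (a - t))) (at t)" for k
    by (auto intro!: derivative_eq_intros has_real_derivative_sinh_sin_cycle[THEN DERIV_chain2])
  have summand: "((\<lambda>t. nderiv (3 - j) f t * of_real (sinh_sin_cycle (i + j) (a - t)))
                has_vector_derivative (g j - g (Suc j))) (at t)" if "j < 4" for j
  proof -
    have "4 - j = Suc (3 - j)" "4 - Suc j = 3 - j" using that by simp_all
    then show ?thesis
      using that has_vector_derivative_mult[OF Cn_has_vector_derivative[OF f t] kernel,
          of "3 - j" "i + j"]
      by (simp add: g_def algebra_simps)
  qed
  have "(lagrange_concomitant f i a has_vector_derivative (\<Sum>j<4. g j - g (Suc j))) (at t)"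
    unfolding lagrange_concomitant_def[abs_def] by (rule has_vector_derivative_sum) (simp add: summand)
  moreover have "sinh_sin_cycle (i + 4) = sinh_sin_cycle i"
    by (simp add: sinh_sin_cycle_def fun_eq_iff)
  ultimately show ?thesis
    unfolding sum_lessThan_telescope' by (simp add: g_def algebra_simps)
qed

lemma fundamental_theorem_of_calculus_oint:
  assumes "\<And>t. t \<in> closed_segment a b \<Longrightarrow> (E has_vector_derivative e t) (at t)"
  shows "oint a b e = E b - E a"
proof (cases "a \<le> b")
  case True
  then have "(e has_integral (E b - E a)) {a..b}"
    using assms by (intro fundamental_theorem_of_calculus)
      (auto simp: closed_segment_eq_real_ivl intro: has_vector_derivative_at_within)
  with True show ?thesis by (simp add: oint_def integral_unique)
next
  case False
  then have "(e has_integral (E a - E b)) {b..a}"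
    using assms by (intro fundamental_theorem_of_calculus)
      (auto simp: closed_segment_eq_real_ivl intro: has_vector_derivative_at_within)
  with False show ?thesis by (simp add: oint_def integral_unique)
qed

lemma lagrange_concomitant_at_base_point:
  assumes "i < 4"
  shows "lagrange_concomitant f i a a = 2 * nderiv i f a"
proof -
  have "(i + j) mod 4 = 3 \<longleftrightarrow> j = 3 - i" if "j < 4" for j
    using assms that by presburger
  then have "lagrange_concomitant f i a a = (\<Sum>j<4. if j = 3 - i then 2 * nderiv (3 - j) f a else 0)"
    unfolding lagrange_concomitant_def by (intro sum.cong) (auto simp: sinh_sin_cycle_0)
  also have "\<dots> = 2 * nderiv i f a"
    using assms by (simp add: sum.delta)
  finally show ?thesis .
qed

lemma nderiv_plus_oint_eq_lagrange_concomitant: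
  assumes f: "f \<in> Cn 4 I" and segment: "closed_segment a x \<subseteq> I" and "i < 4"
  shows "nderiv i f a
           + 1/2 * oint a x (\<lambda>t. (nderiv 4 f t - f t) * of_real (sinh_sin_cycle i (a - t)))
         = 1/2 * lagrange_concomitant f i a x"
proof -
  have "oint a x (\<lambda>t. (nderiv 4 f t - f t) * of_real (sinh_sin_cycle i (a - t)))
          = lagrange_concomitant f i a x - 2 * nderiv i f a"
    using segment has_vector_derivative_lagrange_concomitant[OF f]
    by (subst fundamental_theorem_of_calculus_oint[where E = "lagrange_concomitant f i a"])
       (auto simp: lagrange_concomitant_at_base_point \<open>i < 4\<close>)
  then show ?thesis by (simp add: algebra_simps)
qed

lemma sinh_sin_cycle_boundary_identity:
  fixes u v :: real
  defines "d \<equiv> u - v"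
  shows "sinh_sin_cycle j (- v)
            * ((cosh d - cos d) * (cosh u - cos u) - (sinh d + sin d) * (sinh u - sin u))
       + sinh_sin_cycle (Suc j) (- v)
            * ((cosh d - cos d) * (sinh u - sin u) - (sinh d - sin d) * (cosh u - cos u))
       + sinh_sin_cycle j (- u)
            * ((cosh d - cos d) * (cosh v - cos v) + (sinh d + sin d) * (sinh v - sin v))
       + sinh_sin_cycle (Suc j) (- u)
            * ((cosh d - cos d) * (sinh v - sin v) + (sinh d - sin d) * (cosh v - cos v))
       = (if j mod 4 = 3 then 4 - 4 * cosh d * cos d else 0)"
proof -
  have pythagoras: "cosh u ^ 2 - sinh u ^ 2 = 1" "cosh v ^ 2 - sinh v ^ 2 = 1"
    "cos u ^ 2 + sin u ^ 2 = 1" "cos v ^ 2 + sin v ^ 2 = 1"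
    by (simp_all add: cosh_square_eq)
  note addition_formulas =
    cosh_minus sinh_minus cos_minus sin_minus cosh_diff sinh_diff cos_diff sin_diff
  show ?thesis
  proof (cases j rule: mod_4_cases)
    case 1
    then have cycle: "sinh_sin_cycle j = (\<lambda>u. sinh u - sin u)"
        "sinh_sin_cycle (Suc j) = (\<lambda>u. cosh u - cos u)" "(j mod 4 = 3) = False"
      using mod_4_Suc[of j] by (simp_all add: sinh_sin_cycle_eq)
    show ?thesis
      unfolding cycle d_def if_False addition_formulas by (simp add: algebra_simps)
  next
    case 2
    then have cycle: "sinh_sin_cycle j = (\<lambda>u. cosh u - cos u)"
        "sinh_sin_cycle (Suc j) = (\<lambda>u. sinh u + sin u)" "(j mod 4 = 3) = False"
      using mod_4_Suc[of j] by (simp_all add: sinh_sin_cycle_eq)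
    show ?thesis
      unfolding cycle d_def if_False addition_formulas
      using pythagoras by algebra
  next
    case 3
    then have cycle: "sinh_sin_cycle j = (\<lambda>u. sinh u + sin u)"
        "sinh_sin_cycle (Suc j) = (\<lambda>u. cosh u + cos u)" "(j mod 4 = 3) = False"
      using mod_4_Suc[of j] by (simp_all add: sinh_sin_cycle_eq)
    show ?thesis
      unfolding cycle d_def if_False addition_formulas
      using pythagoras by algebra
  next
    case 4
    then have cycle: "sinh_sin_cycle j = (\<lambda>u. cosh u + cos u)"
        "sinh_sin_cycle (Suc j) = (\<lambda>u. sinh u - sin u)" "(j mod 4 = 3) = True"
      using mod_4_Suc[of j] by (simp_all add: sinh_sin_cycle_eq)
    show ?thesis
      unfolding cycle d_def if_True addition_formulas
      using pythagoras by algebra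
  qed
qed

lemma lagrange_concomitant_combination:
  fixes f :: "real \<Rightarrow> complex" and a1 a2 x :: real
  defines "d \<equiv> a1 - a2"
  shows "1/2 * lagrange_concomitant f 0 a1 x
            * of_real ((cosh d - cos d) * (cosh (x - a2) - cos (x - a2))
                        - (sinh d + sin d) * (sinh (x - a2) - sin (x - a2)))
       + 1/2 * lagrange_concomitant f 1 a1 x
            * of_real ((cosh d - cos d) * (sinh (x - a2) - sin (x - a2))
                        - (sinh d - sin d) * (cosh (x - a2) - cos (x - a2)))
       + 1/2 * lagrange_concomitant f 0 a2 x
            * of_real ((cosh d - cos d) * (cosh (x - a1) - cos (x - a1))
                        + (sinh d + sin d) * (sinh (x - a1) - sin (x - a1)))
       + 1/2 * lagrange_concomitant f 1 a2 x
            * of_real ((cosh d - cos d) * (sinh (x - a1) - sin (x - a1))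
                        + (sinh d - sin d) * (cosh (x - a1) - cos (x - a1)))
       = of_real (2 - 2 * cosh d * cos d) * f x"
    (is "?c1 * of_real ?A1 + ?c2 * of_real ?B1 + ?c3 * of_real ?A2 + ?c4 * of_real ?B2 = _")
proof -
  have coefficient: "sinh_sin_cycle j (a1 - x) * ?A1 + sinh_sin_cycle (Suc j) (a1 - x) * ?B1
      + sinh_sin_cycle j (a2 - x) * ?A2 + sinh_sin_cycle (Suc j) (a2 - x) * ?B2
      = (if j mod 4 = 3 then 4 - 4 * cosh d * cos d else 0)" for j
    using sinh_sin_cycle_boundary_identity[where u = "x - a2" and v = "x - a1"]
    by (simp add: d_def)
  have distrib: "1/2 * (F * of_real p) * of_real A + 1/2 * (F * of_real q) * of_real B
      + 1/2 * (F * of_real p') * of_real A' + 1/2 * (F * of_real q') * of_real B'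
      = 1/2 * (F * of_real (p * A + q * B + p' * A' + q' * B'))"
    for F :: complex and p q p' q' A B A' B' :: real
    by (simp add: algebra_simps)
  have "?c1 * of_real ?A1 + ?c2 * of_real ?B1 + ?c3 * of_real ?A2 + ?c4 * of_real ?B2
      = 1/2 * (\<Sum>j<4. nderiv (3 - j) f x * of_real
      (sinh_sin_cycle j (a1 - x) * ?A1 + sinh_sin_cycle (Suc j) (a1 - x) * ?B1
       + sinh_sin_cycle j (a2 - x) * ?A2 + sinh_sin_cycle (Suc j) (a2 - x) * ?B2))"
    unfolding lagrange_concomitant_def plus_1_eq_Suc add_0 sum_distrib_left sum_distrib_right
      sum.distrib[symmetric]
    by (rule sum.cong[OF refl], rule distrib)
  also have "\<dots> = 1/2 * (\<Sum>j<4. if j = 3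
                            then nderiv (3 - j) f x * of_real (4 - 4 * cosh d * cos d) else 0)"
    unfolding coefficient by (intro arg_cong[where f = "(*) _"] sum.cong) auto
  also have "\<dots> = of_real (2 - 2 * cosh d * cos d) * f x"
    by simp
  finally show ?thesis .
qed

theorem mainTheorem10:
  fixes I :: "real set" and a1 a2 x :: real and f :: "real \<Rightarrow> complex"
  assumes "open I" and "is_interval I"
    and "a1 \<in> I" and "a2 \<in> I"
    and "cosh (a1 - a2) * cos (a1 - a2) \<noteq> 1"
    and "f \<in> Cn 4 I" and "x \<in> I"
  shows "let d = a1 - a2; C = cosh d; c = cos d; S = sinh d; s = sin d; K = 2 - 2 * C * c;
             g = (\<lambda>t. nderiv 4 f t - f t) in
    complex_of_real K * f x =
      (f a1 + 1/2 * oint a1 x (\<lambda>t. g t * complex_of_real (sinh (a1 - t) - sin (a1 - t))))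
        * complex_of_real ((C - c) * (cosh (x - a2) - cos (x - a2)) - (S + s) * (sinh (x - a2) - sin (x - a2)))
    + (nderiv 1 f a1 + 1/2 * oint a1 x (\<lambda>t. g t * complex_of_real (cosh (a1 - t) - cos (a1 - t))))
        * complex_of_real ((C - c) * (sinh (x - a2) - sin (x - a2)) - (S - s) * (cosh (x - a2) - cos (x - a2)))
    + (f a2 + 1/2 * oint a2 x (\<lambda>t. g t * complex_of_real (sinh (a2 - t) - sin (a2 - t))))
        * complex_of_real ((C - c) * (cosh (x - a1) - cos (x - a1)) + (S + s) * (sinh (x - a1) - sin (x - a1)))
    + (nderiv 1 f a2 + 1/2 * oint a2 x (\<lambda>t. g t * complex_of_real (cosh (a2 - t) - cos (a2 - t))))
        * complex_of_real ((C - c) * (sinh (x - a1) - sin (x - a1)) + (S - s) * (cosh (x - a1) - cos (x - a1)))"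
proof -
  have "convex I"
    using \<open>is_interval I\<close> by (simp add: is_interval_convex_1)
  then have segments: "closed_segment a1 x \<subseteq> I" "closed_segment a2 x \<subseteq> I"
    using \<open>a1 \<in> I\<close> \<open>a2 \<in> I\<close> \<open>x \<in> I\<close> by (simp_all add: closed_segment_subset)
  have representation:
    "f a + 1/2 * oint a x (\<lambda>t. (nderiv 4 f t - f t) * of_real (sinh (a - t) - sin (a - t)))
       = 1/2 * lagrange_concomitant f 0 a x"
    "nderiv 1 f a + 1/2 * oint a x (\<lambda>t. (nderiv 4 f t - f t) * of_real (cosh (a - t) - cos (a - t)))
       = 1/2 * lagrange_concomitant f 1 a x"
    if "closed_segment a x \<subseteq> I" for a
    using nderiv_plus_oint_eq_lagrange_concomitant[OF \<open>f \<in> Cn 4 I\<close> that, of 0]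
      nderiv_plus_oint_eq_lagrange_concomitant[OF \<open>f \<in> Cn 4 I\<close> that, of 1]
    by (simp_all add: sinh_sin_cycle_eq)
  show ?thesis
    unfolding Let_def representation[OF segments(1)] representation[OF segments(2)]
    by (rule lagrange_concomitant_combination[symmetric])
qed

end
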